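(* Let $d,k\ge 1$, let $\pi(a|s)$ be a policy on actions $a\in\{0,\dots,k-1\}$ and states $s\in\{1,\dots,d\}$, and let $M=(M^a)_{a}$ be a family of nonnegative $d\times d$ matrices with $M^a_{s+}:=\sum_{s'}M^a_{ss'}=\pi(a|s)$ for all $a,s$, and such that $M^+:=\sum_a M^a$ has all entries strictly positive. Then the following are equivalent: (1) every family $W=(W^a)_a$ of nonnegative $d\times d$ matrices with $W^a_{s+}=\pi(a|s)$ for all $a,s$, with $W^+:=\sum_a W^a$ entrywise strictly positive, and with $M^a\oslash M^+=W^a\oslash W^+$ for all $a$, satisfies $W=M$; (2) for every state $s$, the $k\times d$ matrix $(M^a_{ss'})_{a,s'}$ has rank $\ge d$ (i.e. rank $d$).
   Context: $M^a_{ss'}$ is interpreted as $\pi(a|s)\,p(s'|s,a)$ for a controlled Markov process, so $B^a:=M^a\oslash M^+$ is the inverse model $p(a|s,s')$. Here $\oslash$ denotes entrywise division of matrices, $[A\oslash B]_{ss'}=A_{ss'}/B_{ss'}$. *)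

theory Defs
  imports "HOL-Analysis.Analysis"
begin

end

theory Submission
  imports Defs
begin

text \<open>If \<open>W\<close> has the same policy and inverse model as \<open>M\<close>, then \<open>W\<^sup>a = M\<^sup>a \<odot> C\<close> with the positive
  matrix \<open>C = W\<^sup>+ \<oslash> M\<^sup>+\<close>, and the row-sum constraints say exactly that the \<open>s\<close>-th row of
  \<open>C\<close> minus the all-ones vector lies in the kernel of the \<open>k \<times> d\<close> matrix \<open>(M\<^sup>a\<^sub>s\<^sub>s\<^sub>')\<^sub>a\<^sub>,\<^sub>s\<^sub>'\<close>.
  So \<open>M\<close> is the only such \<open>W\<close> iff these kernels contain no vector \<open>x\<close> with \<open>1 + x > 0\<close> other
  than \<open>0\<close>; since kernels are closed under scaling, this means they are trivial, i.e. the
  matrices have full column rank \<open>d\<close>.\<close>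

definition compatible_model ::
    "('a::finite \<Rightarrow> 's::finite \<Rightarrow> real) \<Rightarrow> ('a \<Rightarrow> 's \<Rightarrow> 's \<Rightarrow> real) \<Rightarrow> ('a \<Rightarrow> 's \<Rightarrow> 's \<Rightarrow> real) \<Rightarrow> bool"
  where "compatible_model p M W \<longleftrightarrow>
    (\<forall>a s s'. W a s s' \<ge> 0) \<and>
    (\<forall>a s. (\<Sum>s'\<in>UNIV. W a s s') = p a s) \<and>
    (\<forall>s s'. (\<Sum>a\<in>UNIV. W a s s') > 0) \<and>
    (\<forall>a s s'. M a s s' / (\<Sum>b\<in>UNIV. M b s s') = W a s s' / (\<Sum>b\<in>UNIV. W b s s'))"

definition action_state_matrix :: "('a::finite \<Rightarrow> 's::finite \<Rightarrow> 's \<Rightarrow> real) \<Rightarrow> 's \<Rightarrow> real^'s^'a"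
  where "action_state_matrix M s = (\<chi> a s'. M a s s')"

lemma action_state_matrix_mult_vec:
  "(action_state_matrix M s *v v) $ a = (\<Sum>s'\<in>UNIV. M a s s' * v $ s')"
  by (simp add: action_state_matrix_def matrix_vector_mult_def)

lemma full_rank_iff_trivial_kernel:
  fixes A :: "real^'n^'m"
  shows "CARD('n) \<le> rank A \<longleftrightarrow> (\<forall>x. A *v x = 0 \<longrightarrow> x = 0)"
  using rank_bound[of A] matrix_nonfull_linear_equations_eq[of A] by auto

lemma trivial_kernel_iff_no_positive_perturbation:
  fixes A :: "real^'n^'m"
  shows "(\<forall>x. A *v x = 0 \<longrightarrow> x = 0) \<longleftrightarrow> (\<forall>c. (\<forall>i. c $ i > 0) \<and> A *v c = A *v 1 \<longrightarrow> c = 1)"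
proof
  assume "\<forall>x. A *v x = 0 \<longrightarrow> x = 0"
  then show "\<forall>c. (\<forall>i. c $ i > 0) \<and> A *v c = A *v 1 \<longrightarrow> c = 1"
    by (metis eq_iff_diff_eq_0 matrix_vector_mult_diff_distrib)
next
  assume fixed: "\<forall>c. (\<forall>i. c $ i > 0) \<and> A *v c = A *v 1 \<longrightarrow> c = 1"
  show "\<forall>x. A *v x = 0 \<longrightarrow> x = 0"
  proof (intro allI impI)
    fix x :: "real^'n"
    assume "A *v x = 0"
    define e where "e = 1 / (1 + norm x)"
    have e_pos: "e > 0"
      by (simp add: e_def add_pos_nonneg)
    have "1 + e * x $ i > 0" for i
    proof -
      have "\<bar>e * x $ i\<bar> \<le> e * norm x"
        using e_pos component_le_norm_cart[of x i] by (simp add: abs_mult mult_left_mono)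
      also have "\<dots> < 1"
        by (simp add: e_def divide_less_eq add_pos_nonneg)
      finally show ?thesis
        unfolding abs_less_iff by linarith
    qed
    moreover have "A *v (1 + e *\<^sub>R x) = A *v 1"
      using \<open>A *v x = 0\<close> by (simp add: matrix_vector_right_distrib matrix_vector_mult_scaleR)
    ultimately have "1 + e *\<^sub>R x = 1"
      using fixed[rule_format, of "1 + e *\<^sub>R x"] by simp
    then show "x = 0"
      using e_pos by simp
  qed
qed

lemma compatible_model_iff_rescaling:
  fixes M W :: "'a::finite \<Rightarrow> 's::finite \<Rightarrow> 's \<Rightarrow> real"
  assumes M_nonneg: "\<And>a s s'. M a s s' \<ge> 0"
    and M_plus_pos: "\<And>s s'. (\<Sum>a\<in>UNIV. M a s s') > 0"
  shows "compatible_model p M W \<longleftrightarrow>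
    (\<exists>c. (\<forall>s s'. c s $ s' > 0) \<and> (\<forall>a s. (\<Sum>s'\<in>UNIV. M a s s' * c s $ s') = p a s) \<and>
         W = (\<lambda>a s s'. M a s s' * c s $ s'))"
proof
  assume compatible: "compatible_model p M W"
  define c where "c s = (\<chi> s'. (\<Sum>b\<in>UNIV. W b s s') / (\<Sum>b\<in>UNIV. M b s s'))" for s
  have W_plus_pos: "(\<Sum>b\<in>UNIV. W b s s') > 0" for s s'
    using compatible by (simp add: compatible_model_def)
  have W_eq: "W = (\<lambda>a s s'. M a s s' * c s $ s')"
  proof (intro ext)
    fix a s s'
    have "M a s s' / (\<Sum>b\<in>UNIV. M b s s') = W a s s' / (\<Sum>b\<in>UNIV. W b s s')"
      using compatible by (simp add: compatible_model_def)
    then show "W a s s' = M a s s' * c s $ s'"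
      using W_plus_pos[of s s'] M_plus_pos[of s s'] by (simp add: c_def field_simps)
  qed
  moreover have "\<forall>s s'. c s $ s' > 0"
    using W_plus_pos M_plus_pos by (simp add: c_def)
  moreover have "\<forall>a s. (\<Sum>s'\<in>UNIV. M a s s' * c s $ s') = p a s"
    using compatible W_eq by (simp add: compatible_model_def)
  ultimately show "\<exists>c. (\<forall>s s'. c s $ s' > 0) \<and> (\<forall>a s. (\<Sum>s'\<in>UNIV. M a s s' * c s $ s') = p a s) \<and>
      W = (\<lambda>a s s'. M a s s' * c s $ s')"
    by blast
next
  assume "\<exists>c. (\<forall>s s'. c s $ s' > 0) \<and> (\<forall>a s. (\<Sum>s'\<in>UNIV. M a s s' * c s $ s') = p a s) \<and>
      W = (\<lambda>a s s'. M a s s' * c s $ s')"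
  then obtain c where c_pos: "\<And>s s'. c s $ s' > 0"
    and row_sums: "\<And>a s. (\<Sum>s'\<in>UNIV. M a s s' * c s $ s') = p a s"
    and W_eq: "W = (\<lambda>a s s'. M a s s' * c s $ s')"
    by blast
  have W_plus: "(\<Sum>b\<in>UNIV. W b s s') = (\<Sum>b\<in>UNIV. M b s s') * c s $ s'" for s s'
    by (simp add: W_eq sum_distrib_right)
  show "compatible_model p M W"
    unfolding compatible_model_def
  proof (intro conjI allI)
    show "W a s s' \<ge> 0" for a s s'
      using M_nonneg c_pos by (simp add: W_eq less_imp_le)
    show "(\<Sum>s'\<in>UNIV. W a s s') = p a s" for a s
      by (simp add: W_eq row_sums)
    show "(\<Sum>b\<in>UNIV. W b s s') > 0" for s s'
      using M_plus_pos c_pos by (simp add: W_plus)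
    show "M a s s' / (\<Sum>b\<in>UNIV. M b s s') = W a s s' / (\<Sum>b\<in>UNIV. W b s s')" for a s s'
      using c_pos[of s s'] unfolding W_plus by (simp add: W_eq)
  qed
qed

lemma rescaling_eq_self_iff:
  fixes M :: "'a::finite \<Rightarrow> 's::finite \<Rightarrow> 's \<Rightarrow> real"
  assumes M_plus_pos: "\<And>s s'. (\<Sum>a\<in>UNIV. M a s s') > 0"
  shows "(\<lambda>a s s'. M a s s' * c s $ s') = M \<longleftrightarrow> c = (\<lambda>_. 1)"
proof
  assume rescaled: "(\<lambda>a s s'. M a s s' * c s $ s') = M"
  show "c = (\<lambda>_. 1)"
  proof (intro ext vec_eq_iff[THEN iffD2] allI)
    fix s s'
    have M_c: "M a s s' * c s $ s' = M a s s'" for a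
      by (fact fun_cong[OF fun_cong[OF fun_cong[OF rescaled]]])
    have "(\<Sum>a\<in>UNIV. M a s s') * c s $ s' = (\<Sum>a\<in>UNIV. M a s s')"
      by (simp only: sum_distrib_right M_c)
    then show "c s $ s' = 1 $ s'"
      using M_plus_pos[of s s'] by simp
  qed
qed simp

lemma unique_solution_rowwise_iff:
  assumes "\<And>s. P s u"
  shows "(\<forall>c. (\<forall>s. P s (c s)) \<longrightarrow> c = (\<lambda>_. u)) \<longleftrightarrow> (\<forall>s v. P s v \<longrightarrow> v = u)"
proof
  assume unique: "\<forall>c. (\<forall>s. P s (c s)) \<longrightarrow> c = (\<lambda>_. u)"
  show "\<forall>s v. P s v \<longrightarrow> v = u"
  proof (intro allI impI)
    fix s v
    assume "P s v"
    then have "(\<lambda>t. if t = s then v else u) = (\<lambda>_. u)"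
      using unique assms by simp
    then show "v = u"
      by (metis (full_types))
  qed
qed auto

theorem proposition1:
  fixes pi :: "'act::finite \<Rightarrow> 's::finite \<Rightarrow> real"
    and M :: "'act \<Rightarrow> 's \<Rightarrow> 's \<Rightarrow> real"
  assumes pi_nonneg: "\<And>a s. pi a s \<ge> 0"
    and pi_sum: "\<And>s. (\<Sum>a\<in>UNIV. pi a s) = 1"
    and M_nonneg: "\<And>a s s'. M a s s' \<ge> 0"
    and M_row: "\<And>a s. (\<Sum>s'\<in>UNIV. M a s s') = pi a s"
    and M_plus_pos: "\<And>s s'. (\<Sum>a\<in>UNIV. M a s s') > 0"
  shows "(\<forall>W :: 'act \<Rightarrow> 's \<Rightarrow> 's \<Rightarrow> real.
            (\<forall>a s s'. W a s s' \<ge> 0) \<and>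
            (\<forall>a s. (\<Sum>s'\<in>UNIV. W a s s') = pi a s) \<and>
            (\<forall>s s'. (\<Sum>a\<in>UNIV. W a s s') > 0) \<and>
            (\<forall>a s s'. M a s s' / (\<Sum>b\<in>UNIV. M b s s') = W a s s' / (\<Sum>b\<in>UNIV. W b s s'))
            \<longrightarrow> W = M)
         \<longleftrightarrow> (\<forall>s. rank ((\<chi> a s'. M a s s') :: real^'s^'act) \<ge> CARD('s))"
proof -
  let ?A = "action_state_matrix M"
  have row_sums_iff: "(\<forall>a s. (\<Sum>s'\<in>UNIV. M a s s' * c s $ s') = pi a s) \<longleftrightarrow>
      (\<forall>s. ?A s *v c s = ?A s *v 1)" for c
    by (auto simp: vec_eq_iff action_state_matrix_mult_vec M_row)
  have "(\<forall>W. compatible_model pi M W \<longrightarrow> W = M) \<longleftrightarrow>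
      (\<forall>c. (\<forall>s s'. c s $ s' > 0) \<and> (\<forall>a s. (\<Sum>s'\<in>UNIV. M a s s' * c s $ s') = pi a s) \<longrightarrow>
           (\<lambda>a s s'. M a s s' * c s $ s') = M)"
    by (auto simp add: compatible_model_iff_rescaling[where M = M and p = pi, OF M_nonneg M_plus_pos])
  also have "\<dots> \<longleftrightarrow> (\<forall>c. (\<forall>s. (\<forall>i. c s $ i > 0) \<and> ?A s *v c s = ?A s *v 1) \<longrightarrow> c = (\<lambda>_. 1))"
    by (simp add: rescaling_eq_self_iff[where M = M, OF M_plus_pos] row_sums_iff all_conj_distrib)
  also have "\<dots> \<longleftrightarrow> (\<forall>s v. (\<forall>i. v $ i > 0) \<and> ?A s *v v = ?A s *v 1 \<longrightarrow> v = 1)"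
    by (rule unique_solution_rowwise_iff) simp
  also have "\<dots> \<longleftrightarrow> (\<forall>s. CARD('s) \<le> rank (?A s))"
    by (simp add: full_rank_iff_trivial_kernel trivial_kernel_iff_no_positive_perturbation)
  finally show ?thesis
    unfolding compatible_model_def action_state_matrix_def .
qed

end
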